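(* Let $(X,r)$ be a non-degenerate involutive set-theoretic solution with $|X|=n$, identified with $\{1,\dots,n\}$, and let $(\mathcal{X}^2,\tilde r)$ be the induced pair. If $(X,r)$ is of class $m$ with $m>1$, then $(\mathcal{X}^2,\tilde r)$ is also of class $m$.
   Context: A set-theoretic solution is $r:X\times X\to X\times X$, $r(x,y)=(\sigma_x(y),\gamma_y(x))$, with $r^{12}r^{23}r^{12}=r^{23}r^{12}r^{23}$; non-degenerate: all $\sigma_x,\gamma_x$ bijective; involutive: $r\circ r=\mathrm{Id}$. Induced pair: $\mathcal{X}^2=\{T_i^k:1\le i,k\le n\}$ ($n^2$ symbols), $\tilde r(T_i^k,T_j^l)=(g_i^k(T_j^l),f_j^l(T_i^k))$ where $g_i^k(T_j^l)=T_{\sigma_i(j)}^{\sigma_k(l)}$ and $f_j^l(T_i^k)=T_{\gamma_j(i)}^{\gamma_l(k)}$; this is a non-degenerate involutive solution whose maps "$\sigma$" are the $g_i^k$. Class: for a non-degenerate involutive solution with maps $\sigma_x$, let $D(x)=\sigma_x^{-1}(x)$; the solution is of class $m$ if $m$ is the minimal natural number such that $\sigma_x\sigma_{D(x)}\sigma_{D^2(x)}\cdots\sigma_{D^{m-1}(x)}=\mathrm{Id}$ for every element $x$. *)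

theory Defs
  imports Main
begin

definition sol_r :: "('a \<Rightarrow> 'a \<Rightarrow> 'a) \<Rightarrow> ('a \<Rightarrow> 'a \<Rightarrow> 'a) \<Rightarrow> 'a \<times> 'a \<Rightarrow> 'a \<times> 'a" where
  "sol_r \<sigma> \<gamma> = (\<lambda>(x, y). (\<sigma> x y, \<gamma> y x))"

definition r12 :: "('a \<times> 'a \<Rightarrow> 'a \<times> 'a) \<Rightarrow> 'a \<times> 'a \<times> 'a \<Rightarrow> 'a \<times> 'a \<times> 'a" where
  "r12 r = (\<lambda>(x, y, z). (fst (r (x, y)), snd (r (x, y)), z))"

definition r23 :: "('a \<times> 'a \<Rightarrow> 'a \<times> 'a) \<Rightarrow> 'a \<times> 'a \<times> 'a \<Rightarrow> 'a \<times> 'a \<times> 'a" where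
  "r23 r = (\<lambda>(x, y, z). (x, fst (r (y, z)), snd (r (y, z))))"

definition is_solution :: "'a set \<Rightarrow> ('a \<Rightarrow> 'a \<Rightarrow> 'a) \<Rightarrow> ('a \<Rightarrow> 'a \<Rightarrow> 'a) \<Rightarrow> bool" where
  "is_solution X \<sigma> \<gamma> \<longleftrightarrow>
     (\<forall>x\<in>X. \<forall>y\<in>X. \<sigma> x y \<in> X \<and> \<gamma> y x \<in> X) \<and>
     (\<forall>x\<in>X. \<forall>y\<in>X. \<forall>z\<in>X.
        (r12 (sol_r \<sigma> \<gamma>) \<circ> r23 (sol_r \<sigma> \<gamma>) \<circ> r12 (sol_r \<sigma> \<gamma>)) (x, y, z)
      = (r23 (sol_r \<sigma> \<gamma>) \<circ> r12 (sol_r \<sigma> \<gamma>) \<circ> r23 (sol_r \<sigma> \<gamma>)) (x, y, z))"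

definition non_degenerate :: "'a set \<Rightarrow> ('a \<Rightarrow> 'a \<Rightarrow> 'a) \<Rightarrow> ('a \<Rightarrow> 'a \<Rightarrow> 'a) \<Rightarrow> bool" where
  "non_degenerate X \<sigma> \<gamma> \<longleftrightarrow> (\<forall>x\<in>X. bij_betw (\<sigma> x) X X \<and> bij_betw (\<gamma> x) X X)"

definition involutive :: "'a set \<Rightarrow> ('a \<Rightarrow> 'a \<Rightarrow> 'a) \<Rightarrow> ('a \<Rightarrow> 'a \<Rightarrow> 'a) \<Rightarrow> bool" where
  "involutive X \<sigma> \<gamma> \<longleftrightarrow> (\<forall>x\<in>X. \<forall>y\<in>X. sol_r \<sigma> \<gamma> (sol_r \<sigma> \<gamma> (x, y)) = (x, y))"

definition Dmap :: "'a set \<Rightarrow> ('a \<Rightarrow> 'a \<Rightarrow> 'a) \<Rightarrow> 'a \<Rightarrow> 'a" where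
  "Dmap X \<sigma> x = inv_into X (\<sigma> x) x"

fun sigma_prod :: "'a set \<Rightarrow> ('a \<Rightarrow> 'a \<Rightarrow> 'a) \<Rightarrow> nat \<Rightarrow> 'a \<Rightarrow> 'a \<Rightarrow> 'a" where
  "sigma_prod X \<sigma> 0 x = id"
| "sigma_prod X \<sigma> (Suc k) x = \<sigma> x \<circ> sigma_prod X \<sigma> k (Dmap X \<sigma> x)"

definition class_prop :: "'a set \<Rightarrow> ('a \<Rightarrow> 'a \<Rightarrow> 'a) \<Rightarrow> nat \<Rightarrow> bool" where
  "class_prop X \<sigma> k \<longleftrightarrow> (\<forall>x\<in>X. \<forall>y\<in>X. sigma_prod X \<sigma> k x y = y)"

definition of_class :: "'a set \<Rightarrow> ('a \<Rightarrow> 'a \<Rightarrow> 'a) \<Rightarrow> nat \<Rightarrow> bool" where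
  "of_class X \<sigma> m \<longleftrightarrow> m \<ge> 1 \<and> class_prop X \<sigma> m \<and> (\<forall>k. 1 \<le> k \<and> k < m \<longrightarrow> \<not> class_prop X \<sigma> k)"

text \<open>Induced pair on X^2 (T_i^k = (i,k)).\<close>
definition ind_sigma :: "('a \<Rightarrow> 'a \<Rightarrow> 'a) \<Rightarrow> 'a \<times> 'a \<Rightarrow> 'a \<times> 'a \<Rightarrow> 'a \<times> 'a" where
  "ind_sigma \<sigma> = (\<lambda>(i, k) (j, l). (\<sigma> i j, \<sigma> k l))"

definition ind_gamma :: "('a \<Rightarrow> 'a \<Rightarrow> 'a) \<Rightarrow> 'a \<times> 'a \<Rightarrow> 'a \<times> 'a \<Rightarrow> 'a \<times> 'a" where
  "ind_gamma \<gamma> = (\<lambda>(j, l) (i, k). (\<gamma> j i, \<gamma> l k))"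

end

theory Submission
  imports Defs
begin

text \<open>The maps of the induced pair act componentwise, and so do D and the products
  sigma_x sigma_(D x) ... sigma_(D^(t-1) x). Hence a product is the identity on X\<times>X exactly
  when it is the identity on X (test on diagonal pairs for one direction), for every length t,
  and the classes agree.\<close>

lemma Dmap_mem:
  assumes "\<And>y. y \<in> X \<Longrightarrow> bij_betw (\<sigma> y) X X" "x \<in> X"
  shows "Dmap X \<sigma> x \<in> X"
  using assms unfolding Dmap_def bij_betw_def by (auto intro: inv_into_into)

lemma sigma_Dmap:
  assumes "\<And>y. y \<in> X \<Longrightarrow> bij_betw (\<sigma> y) X X" "x \<in> X"
  shows "\<sigma> x (Dmap X \<sigma> x) = x"
  using assms unfolding Dmap_def bij_betw_def by (auto intro: f_inv_into_f)

lemma bij_betw_ind_sigma: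
  assumes "bij_betw (\<sigma> i) X X" "bij_betw (\<sigma> k) X X"
  shows "bij_betw (ind_sigma \<sigma> (i, k)) (X \<times> X) (X \<times> X)"
proof -
  have "ind_sigma \<sigma> (i, k) = map_prod (\<sigma> i) (\<sigma> k)"
    by (auto simp: ind_sigma_def)
  then show ?thesis
    using bij_betw_map_prod[OF assms] by simp
qed

lemma Dmap_ind_sigma:
  assumes bij: "\<And>x. x \<in> X \<Longrightarrow> bij_betw (\<sigma> x) X X" and "i \<in> X" "k \<in> X"
  shows "Dmap (X \<times> X) (ind_sigma \<sigma>) (i, k) = (Dmap X \<sigma> i, Dmap X \<sigma> k)"
  unfolding Dmap_def[of "X \<times> X"]
proof (rule inv_into_f_eq)
  show "inj_on (ind_sigma \<sigma> (i, k)) (X \<times> X)"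
    using bij_betw_ind_sigma[OF bij[OF assms(2)] bij[OF assms(3)]] by (simp add: bij_betw_def)
  show "(Dmap X \<sigma> i, Dmap X \<sigma> k) \<in> X \<times> X"
    using Dmap_mem[of X \<sigma>, OF bij] assms(2,3) by blast
  show "ind_sigma \<sigma> (i, k) (Dmap X \<sigma> i, Dmap X \<sigma> k) = (i, k)"
    using sigma_Dmap[of X \<sigma>, OF bij] assms(2,3) by (simp add: ind_sigma_def)
qed

lemma sigma_prod_ind_sigma:
  assumes bij: "\<And>x. x \<in> X \<Longrightarrow> bij_betw (\<sigma> x) X X" and "i \<in> X" "k \<in> X"
  shows "sigma_prod (X \<times> X) (ind_sigma \<sigma>) t (i, k) (j, l)
    = (sigma_prod X \<sigma> t i j, sigma_prod X \<sigma> t k l)"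
  using assms(2,3)
proof (induction t arbitrary: i k j l)
  case 0
  then show ?case by simp
next
  case (Suc t)
  have "Dmap X \<sigma> i \<in> X" "Dmap X \<sigma> k \<in> X"
    using Dmap_mem[of X \<sigma>, OF bij] Suc.prems by blast+
  then show ?case
    using Suc.IH Dmap_ind_sigma[OF bij Suc.prems] by (simp add: ind_sigma_def)
qed

lemma class_prop_ind_sigma_iff:
  assumes "\<And>x. x \<in> X \<Longrightarrow> bij_betw (\<sigma> x) X X"
  shows "class_prop (X \<times> X) (ind_sigma \<sigma>) t \<longleftrightarrow> class_prop X \<sigma> t"
proof
  assume "class_prop (X \<times> X) (ind_sigma \<sigma>) t"
  then have "sigma_prod (X \<times> X) (ind_sigma \<sigma>) t (x, x) (y, y) = (y, y)"
    if "x \<in> X" "y \<in> X" for x y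
    using that unfolding class_prop_def by blast
  then show "class_prop X \<sigma> t"
    unfolding class_prop_def using sigma_prod_ind_sigma[OF assms] by simp
next
  assume "class_prop X \<sigma> t"
  then show "class_prop (X \<times> X) (ind_sigma \<sigma>) t"
    unfolding class_prop_def using sigma_prod_ind_sigma[OF assms] by auto
qed

lemma of_class_ind_sigma_iff:
  assumes "\<And>x. x \<in> X \<Longrightarrow> bij_betw (\<sigma> x) X X"
  shows "of_class (X \<times> X) (ind_sigma \<sigma>) m \<longleftrightarrow> of_class X \<sigma> m"
  unfolding of_class_def using class_prop_ind_sigma_iff[OF assms] by simp

theorem lemma3p5:
  fixes n m :: nat and \<sigma> \<gamma> :: "nat \<Rightarrow> nat \<Rightarrow> nat"
  assumes "is_solution {1..n} \<sigma> \<gamma>"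
    and "non_degenerate {1..n} \<sigma> \<gamma>"
    and "involutive {1..n} \<sigma> \<gamma>"
    and "of_class {1..n} \<sigma> m"
    and "m > 1"
  shows "of_class ({1..n} \<times> {1..n}) (ind_sigma \<sigma>) m"
proof -
  have "\<And>x. x \<in> {1..n} \<Longrightarrow> bij_betw (\<sigma> x) {1..n} {1..n}"
    using assms(2) unfolding non_degenerate_def by blast
  then show ?thesis
    using assms(4) of_class_ind_sigma_iff by blast
qed

end
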